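(* The function $\Xi(b)=\cos^2b\int_b^{-b}\frac{d\varphi}{\cos\varphi\sqrt{\cos^4\varphi-\cos^4b}}$ is continuous and increasing on $(-\pi/2,0)$, and $\lim_{b\to0-}\Xi(b)=\frac{\sqrt2}{2}\pi$. *)

theory Defs
  imports "HOL-Analysis.Analysis"
begin

text \<open>The integral is improper at the endpoints; it is taken as the (Lebesgue) interval
  integral, which agrees with the improper Riemann integral since the integrand is
  nonnegative on the open interval.\<close>
definition Xi :: "real \<Rightarrow> real" where
  "Xi b = (cos b)^2 * (LBINT \<phi>=b..-b. 1 / (cos \<phi> * sqrt ((cos \<phi>)^4 - (cos b)^4)))"

end

theory Submission
  imports Defs
begin

(* For fixed b in (-pi/2, 0) put T = tan (-b) and substitute
     phi = arctan (T sin x),   x in (-pi/2, pi/2).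
   This map increases from b to -b, and a direct computation turns the singular
   integrand of Xi into a bounded one:  Xi b = integral over [-pi/2, pi/2] of
     sqrt ((1 - (sin b cos x)^2) / (2 - (sin b cos x)^2)).
   The right-hand side, Xi_ext b, is defined for every real b and is
     - continuous in b, being the integral of a jointly continuous kernel
       over a compact interval;
     - strictly increasing on (-pi/2, 0), since the kernel increases pointwise
       as (sin b)^2 decreases;
     - equal to pi / sqrt 2 at b = 0.
   The file first proves the algebraic identity behind the substitution, then
   the properties of the substitution map, the identity Xi = Xi_ext on
   (-pi/2, 0), the three properties of Xi_ext, and finally the theorem. *)

definition Xi_integrand :: "real \<Rightarrow> real \<Rightarrow> real" where
  "Xi_integrand b \<phi> = 1 / (cos \<phi> * sqrt ((cos \<phi>)^4 - (cos b)^4))"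

(* Writing S = sin b, C = cos b, y = sin x, z = cos x,
   T = -S/C and c = cos (arctan (T y)), the transformed integrand equals the kernel / C^2.
   Both sides are nonnegative, so it suffices to compare their squares. *)
lemma arctan_substitution_identity:
  fixes S C y z :: real
  assumes S: "S < 0" and C: "C > 0" and SC: "S^2 + C^2 = 1"
    and z: "z > 0" and yz: "y^2 + z^2 = 1"
  defines "T \<equiv> - S / C"
  defines "c \<equiv> 1 / sqrt (1 + (T * y)^2)"
  shows "1 / (c * sqrt (c^4 - C^4)) * (T * z / (1 + (T * y)^2))
           = sqrt ((1 - (S * z)^2) / (2 - (S * z)^2)) / C^2"
proof -
  define u where "u = S * z"
  define p where "p = 1 - u^2"
  define q where "q = 1 + (T * y)^2"
  have u: "u \<noteq> 0" using S z by (simp add: u_def)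
  have q_pos: "q > 0" by (simp add: q_def add_pos_nonneg)
  have S1: "S^2 < 1" using SC zero_less_power2[of C] C by linarith
  have "z^2 \<le> 1" using yz zero_le_power2[of y] by linarith
  then have "u^2 \<le> S^2" by (simp add: u_def power_mult_distrib mult_left_le)
  with S1 have p_pos: "p > 0" by (simp add: p_def)
  have "(T * y)^2 * C^2 = S^2 * y^2"
    using C by (simp add: T_def power_mult_distrib power_divide)
  then have "q * C^2 = C^2 + S^2 * (1 - z^2)"
    using yz by (simp add: q_def distrib_right)
  also have "\<dots> = p"
    using SC by (simp add: p_def u_def power_mult_distrib right_diff_distrib)
  finally have qC: "q * C^2 = p" .
  then have C2: "C^2 = p / q"
    using q_pos by (simp add: eq_divide_eq mult.commute)
  have c2: "c^2 = 1 / q"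
    using q_pos by (simp add: c_def q_def[symmetric] power_divide)
  have gap: "c^4 - C^4 = (1 - p^2) / q^2"
  proof -
    have "c^4 - C^4 = (c^2)^2 - (C^2)^2" by simp
    then show ?thesis by (simp add: c2 C2 power_divide diff_divide_distrib)
  qed
  have one_minus_p2: "1 - p^2 = u^2 * (1 + p)"
    by (simp add: p_def power2_eq_square algebra_simps)
  have Tz: "(T * z)^2 = u^2 / C^2"
    by (simp add: T_def u_def power_mult_distrib power_divide)
  have gap_nonneg: "c^4 - C^4 \<ge> 0"
    using p_pos one_minus_p2 by (simp add: gap)
  define L where "L = 1 / (c * sqrt (c^4 - C^4)) * (T * z / q)"
  have "T > 0" using S C by (simp add: T_def divide_neg_pos)
  moreover have "c > 0" using q_pos by (simp add: c_def q_def[symmetric])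
  ultimately have L_nonneg: "L \<ge> 0"
    using z q_pos gap_nonneg unfolding L_def
    by (intro mult_nonneg_nonneg divide_nonneg_nonneg) simp_all
  have "L^2 = 1 / (c^2 * (c^4 - C^4)) * ((T * z)^2 / q^2)"
    using gap_nonneg by (simp add: L_def power_mult_distrib power_divide)
  also have "\<dots> = q / (1 - p^2) * (u^2 / C^2)"
    using q_pos by (simp add: c2 gap Tz)
  also have "\<dots> = q / (C^2 * (1 + p))"
    using u by (simp add: one_minus_p2)
  also have "\<dots> = p / ((1 + p) * C^4)"
    using qC C by (simp add: eq_divide_eq power4_eq_xxxx power2_eq_square)
  finally have "L = sqrt (p / ((1 + p) * C^4))"
    using L_nonneg by (metis real_sqrt_unique)
  also have "\<dots> = sqrt (p / (1 + p)) / C^2"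
    using real_sqrt_abs[of "C^2"] by (simp add: real_sqrt_divide real_sqrt_mult flip: power_mult)
  finally show ?thesis
    by (simp add: L_def q_def p_def u_def)
qed

definition Xi_subst :: "real \<Rightarrow> real \<Rightarrow> real" where
  "Xi_subst b x = arctan (tan (-b) * sin x)"

definition Xi_subst_deriv :: "real \<Rightarrow> real \<Rightarrow> real" where
  "Xi_subst_deriv b x = tan (-b) * cos x / (1 + (tan (-b) * sin x)^2)"

definition Xi_kernel :: "real \<Rightarrow> real \<Rightarrow> real" where
  "Xi_kernel b x = sqrt ((1 - (sin b * cos x)^2) / (2 - (sin b * cos x)^2))"

definition Xi_ext :: "real \<Rightarrow> real" where
  "Xi_ext b = integral {-pi/2..pi/2} (Xi_kernel b)"

lemma Xi_subst_has_derivative: "(Xi_subst b has_real_derivative Xi_subst_deriv b x) (at x)"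
  unfolding Xi_subst_def Xi_subst_deriv_def
  by (auto intro!: derivative_eq_intros simp: field_simps)

lemma Xi_subst_continuous: "isCont (Xi_subst b) x"
  unfolding Xi_subst_def by (intro continuous_intros)

lemma Xi_subst_deriv_continuous: "isCont (Xi_subst_deriv b) x"
proof -
  have "0 < 1 + (tan (-b) * sin x)^2" by (simp add: add_pos_nonneg)
  then show ?thesis unfolding Xi_subst_deriv_def by (intro continuous_intros) auto
qed

lemma Xi_subst_deriv_nonneg:
  assumes "-pi/2 < b" "b < 0" "-pi/2 \<le> x" "x \<le> pi/2"
  shows "0 \<le> Xi_subst_deriv b x"
proof -
  have "tan (-b) > 0" using assms by (intro tan_gt_zero) auto
  moreover have "cos x \<ge> 0" using assms by (intro cos_ge_zero) auto
  ultimately have "0 \<le> tan (-b) * cos x" by (rule mult_nonneg_nonneg[OF less_imp_le])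
  moreover have "0 < 1 + (tan (-b) * sin x)^2" by (simp add: add_pos_nonneg)
  ultimately show ?thesis
    unfolding Xi_subst_deriv_def by (rule divide_nonneg_pos)
qed

lemma Xi_subst_endpoints:
  assumes "-pi/2 < b" "b < 0"
  shows "Xi_subst b (-pi/2) = b" "Xi_subst b (pi/2) = -b"
  using assms arctan_tan[of "-b"] by (auto simp: Xi_subst_def arctan_minus)

lemma Xi_subst_range:
  assumes b: "-pi/2 < b" "b < 0" and x: "-pi/2 < x" "x < pi/2"
  shows "b < Xi_subst b x" "Xi_subst b x < -b"
proof -
  have T: "tan (-b) > 0" using b by (intro tan_gt_zero) auto
  have "cos x > 0" using x by (intro cos_gt_zero_pi) auto
  then have "(sin x)^2 < 1"
    using sin_cos_squared_add[of x] zero_less_power2[of "cos x"] by linarith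
  then have "\<bar>sin x\<bar> < 1"
    by (simp add: abs_square_less_1)
  then have "tan (-b) * (-1) < tan (-b) * sin x" "tan (-b) * sin x < tan (-b) * 1"
    using T by (intro mult_strict_left_mono; simp add: abs_less_iff)+
  then have "arctan (- tan (-b)) < Xi_subst b x" "Xi_subst b x < arctan (tan (-b))"
    unfolding Xi_subst_def arctan_less_iff by simp_all
  then show "b < Xi_subst b x" "Xi_subst b x < -b"
    using b arctan_tan[of "-b"] by (auto simp: arctan_minus)
qed

(* Inside (b, -b) the integrand of Xi is regular: cos phi > cos b > 0. *)
lemma Xi_integrand_regular:
  assumes b: "-pi/2 < b" and \<phi>: "b < \<phi>" "\<phi> < -b"
  shows "isCont (Xi_integrand b) \<phi>" "0 \<le> Xi_integrand b \<phi>"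
proof -
  have cb: "cos b > 0" using b \<phi> by (intro cos_gt_zero_pi) auto
  have "cos (-b) < cos \<bar>\<phi>\<bar>" using b \<phi> by (intro cos_monotone_0_pi) auto
  then have c: "cos b < cos \<phi>" by simp
  then have gap: "(cos \<phi>)^4 - (cos b)^4 > 0"
    using cb power_strict_mono[of "cos b" "cos \<phi>" 4] by simp
  show "isCont (Xi_integrand b) \<phi>"
    unfolding Xi_integrand_def using c cb gap by (intro continuous_intros) auto
  show "0 \<le> Xi_integrand b \<phi>"
    unfolding Xi_integrand_def using c cb gap by simp
qed

lemma Xi_integrand_subst:
  assumes b: "-pi/2 < b" "b < 0" and x: "-pi/2 < x" "x < pi/2"
  shows "Xi_integrand b (Xi_subst b x) * Xi_subst_deriv b x = Xi_kernel b x / (cos b)^2"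
proof -
  have "cos b > 0" using b by (intro cos_gt_zero_pi) auto
  moreover have "sin b < 0" using b sin_gt_zero[of "-b"] by simp
  moreover have "cos x > 0" using x by (intro cos_gt_zero_pi) auto
  moreover have "tan (-b) = - sin b / cos b" by (simp add: tan_def)
  ultimately show ?thesis
    using arctan_substitution_identity[of "sin b" "cos b" "cos x" "sin x"]
    by (simp add: Xi_integrand_def Xi_subst_def Xi_subst_deriv_def Xi_kernel_def cos_arctan)
qed

lemma sin_cos_product_sq_le_one: "(sin b * cos x)^2 \<le> (1 :: real)"
proof -
  have "\<bar>sin b * cos x\<bar> \<le> 1" by (simp add: abs_mult mult_le_one)
  then show ?thesis by (metis abs_ge_zero power2_abs power_le_one)
qed

(* The kernel is jointly continuous, since its denominator 2 - (sin b cos x)^2 is at least 1. *)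
lemma Xi_kernel_continuous: "continuous_on UNIV (\<lambda>z. Xi_kernel (fst z) (snd z))"
proof -
  have "2 - (sin b * cos x)^2 \<noteq> 0" for b x :: real
    using sin_cos_product_sq_le_one[of b x] by linarith
  then show ?thesis
    unfolding Xi_kernel_def by (intro continuous_intros) auto
qed

lemma Xi_kernel_continuous_in_x: "continuous_on A (Xi_kernel b)"
proof -
  have "continuous_on A ((\<lambda>z. Xi_kernel (fst z) (snd z)) \<circ> (\<lambda>x. (b, x)))"
    by (intro continuous_on_compose continuous_intros continuous_on_subset[OF Xi_kernel_continuous])
       auto
  then show ?thesis by (simp add: o_def)
qed

(* One-sided limits at the endpoints in the extended-real form the substitution rule expects. *)
lemma ereal_one_sided_tendsto:
  fixes g :: "real \<Rightarrow> real"
  assumes "isCont g a"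
  shows "((ereal \<circ> g \<circ> real_of_ereal) \<longlongrightarrow> ereal (g a)) (at_right (ereal a))"
    and "((ereal \<circ> g \<circ> real_of_ereal) \<longlongrightarrow> ereal (g a)) (at_left (ereal a))"
proof -
  have "(g \<longlongrightarrow> g a) (at a)" using assms by (simp add: isCont_def)
  then have "(g \<longlongrightarrow> g a) (at_right a)" "(g \<longlongrightarrow> g a) (at_left a)"
    using filterlim_at_split by blast+
  then show "((ereal \<circ> g \<circ> real_of_ereal) \<longlongrightarrow> ereal (g a)) (at_right (ereal a))"
    "((ereal \<circ> g \<circ> real_of_ereal) \<longlongrightarrow> ereal (g a)) (at_left (ereal a))"
    by (simp_all add: ereal_tendsto_simps)
qed

lemma Xi_eq_Xi_ext:
  assumes b: "-pi/2 < b" "b < 0"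
  shows "Xi b = Xi_ext b"
proof -
  let ?g = "Xi_subst b" and ?g' = "Xi_subst_deriv b" and ?f = "Xi_integrand b"
  have cb: "cos b > 0" using b by (intro cos_gt_zero_pi) auto
  have on_interval: "?f (?g x) * ?g' x = Xi_kernel b x / (cos b)^2"
    if "x \<in> {-pi/2<..<pi/2}" for x
    using Xi_integrand_subst[OF b] that by auto
  have "set_integrable lborel {-pi/2..pi/2} (\<lambda>x. Xi_kernel b x / (cos b)^2)"
    using cb by (intro borel_integrable_atLeastAtMost' continuous_intros Xi_kernel_continuous_in_x)
      auto
  then have "set_integrable lborel {-pi/2<..<pi/2} (\<lambda>x. Xi_kernel b x / (cos b)^2)"
    by (rule set_integrable_subset) auto
  then have integrable: "set_integrable lborel (einterval (-pi/2) (pi/2)) (\<lambda>x. ?f (?g x) * ?g' x)"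
    by (subst set_integrable_cong[where f' = "\<lambda>x. Xi_kernel b x / (cos b)^2"])
       (auto simp: on_interval)
  have "((ereal \<circ> ?g \<circ> real_of_ereal) \<longlongrightarrow> ereal b) (at_right (ereal (-pi/2)))"
    "((ereal \<circ> ?g \<circ> real_of_ereal) \<longlongrightarrow> ereal (-b)) (at_left (ereal (pi/2)))"
    using ereal_one_sided_tendsto(1)[OF Xi_subst_continuous[where b = b and x = "-pi/2"]]
      ereal_one_sided_tendsto(2)[OF Xi_subst_continuous[where b = b and x = "pi/2"]]
    unfolding Xi_subst_endpoints[OF b] .
  then have "(LBINT \<phi>=ereal b..ereal (-b). ?f \<phi>)
             = (LBINT x=ereal (-pi/2)..ereal (pi/2). ?f (?g x) * ?g' x)"
    using Xi_subst_range[OF b] Xi_integrand_regular[OF b(1)] Xi_subst_deriv_nonneg[OF b] integrable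
    by (intro interval_integral_substitution_nonneg(2))
       (auto intro: Xi_subst_has_derivative Xi_subst_deriv_continuous)
  also have "\<dots> = integral {-pi/2<..<pi/2} (\<lambda>x. ?f (?g x) * ?g' x)"
    using integrable by (subst interval_integral_eq_integral') auto
  also have "\<dots> = integral {-pi/2<..<pi/2} (\<lambda>x. Xi_kernel b x / (cos b)^2)"
    by (rule integral_cong) (rule on_interval)
  also have "\<dots> = Xi_ext b / (cos b)^2"
    by (simp add: Xi_ext_def integral_open_interval_real[symmetric])
  finally show ?thesis
    using cb by (simp add: Xi_def Xi_integrand_def[abs_def])
qed

lemma Xi_ext_continuous: "continuous_on UNIV Xi_ext"
proof -
  have "continuous_on UNIV (\<lambda>b. integral (cbox (-pi/2) (pi/2)) (Xi_kernel b))"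
    by (rule integral_continuous_on_param)
       (use continuous_on_subset[OF Xi_kernel_continuous] in \<open>auto simp: case_prod_beta\<close>)
  then show ?thesis by (simp add: Xi_ext_def)
qed

lemma sqrt_ratio_strict_antimono:
  fixes u v :: real
  assumes "0 \<le> v" "v < u" "u \<le> 1"
  shows "sqrt ((1 - u) / (2 - u)) < sqrt ((1 - v) / (2 - v))"
  using assms by (simp add: field_simps)

(* Pointwise monotonicity of the kernel: on (-pi/2, 0), larger b means smaller (sin b)^2. *)
lemma Xi_kernel_strict_mono:
  assumes r: "-pi/2 < r" and rs: "r < s" "s < 0" and x: "-pi/2 < x" "x < pi/2"
  shows "Xi_kernel r x < Xi_kernel s x"
proof -
  have "sin r < sin s" using r rs by (subst sin_mono_less_eq) auto
  moreover have "cos x > 0" using x by (intro cos_gt_zero_pi) auto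
  ultimately have "sin r * cos x < sin s * cos x" by (rule mult_strict_right_mono)
  moreover have "sin s * cos x < 0"
    using sin_gt_zero[of "-s"] r rs \<open>cos x > 0\<close> by (intro mult_neg_pos) auto
  ultimately have "(- (sin s * cos x))^2 < (- (sin r * cos x))^2"
    by (intro power_strict_mono) (auto simp: mult_neg_pos)
  then show ?thesis
    using sin_cos_product_sq_le_one[of r x]
    unfolding Xi_kernel_def by (intro sqrt_ratio_strict_antimono) auto
qed

(* Integrating a strict pointwise inequality of continuous functions gives a strict one. *)
lemma Xi_ext_strict_mono: "strict_mono_on {-pi/2<..<0} Xi_ext"
proof (rule strict_mono_onI)
  fix r s :: real
  assume "r \<in> {-pi/2<..<0}" "s \<in> {-pi/2<..<0}" "r < s"
  then show "Xi_ext r < Xi_ext s"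
    unfolding Xi_ext_def using pi_gt_zero
    by (intro integral_less_real Xi_kernel_continuous_in_x Xi_kernel_strict_mono) auto
qed

(* At b = 0 the kernel is the constant 1 / sqrt 2. *)
lemma Xi_ext_at_zero: "Xi_ext 0 = sqrt 2 / 2 * pi"
proof -
  have "Xi_ext 0 = pi * sqrt (1/2)" unfolding Xi_ext_def Xi_kernel_def by simp
  also have "sqrt (1/2 :: real) = sqrt 2 / 2" by (simp add: real_sqrt_divide field_simps)
  finally show ?thesis by simp
qed

theorem proposition5:
  shows "continuous_on {-pi/2<..<0} Xi \<and> strict_mono_on {-pi/2<..<0} Xi \<and>
         (Xi \<longlongrightarrow> sqrt 2 / 2 * pi) (at_left 0)"
proof (intro conjI)
  have eq: "Xi b = Xi_ext b" if "b \<in> {-pi/2<..<0}" for b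
    using Xi_eq_Xi_ext that by auto
  show "continuous_on {-pi/2<..<0} Xi"
    using continuous_on_subset[OF Xi_ext_continuous] by (subst continuous_on_cong[OF refl eq]) auto
  show "strict_mono_on {-pi/2<..<0} Xi"
    using Xi_ext_strict_mono eq by (simp add: strict_mono_on_def)
  have "(Xi_ext \<longlongrightarrow> Xi_ext 0) (at 0)"
    using Xi_ext_continuous by (simp add: continuous_on_def)
  then have "(Xi_ext \<longlongrightarrow> Xi_ext 0) (at_left 0)"
    using filterlim_at_split by blast
  moreover have "\<forall>\<^sub>F b in at_left 0. Xi_ext b = Xi b"
    using eq pi_gt_zero by (intro eventually_at_leftI[of "-pi/2"]) auto
  ultimately show "(Xi \<longlongrightarrow> sqrt 2 / 2 * pi) (at_left 0)"
    unfolding Xi_ext_at_zero by (rule Lim_transform_eventually)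
qed

end
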